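(* Let $(X,d)$ be a complete metric space, let $F:(0,\infty)\to\mathbb{R}$ be right-continuous, and let $\varphi:(0,\infty)\to(0,\infty)$ satisfy: for every $t>0$ and every sequence $(t_n)\subset(t,\infty)$ with $t_n\to t$, $\limsup_{n\to\infty}\varphi(t_n)>0$. Let $T:X\to X$ be contractive and such that for all $x,y\in X$ with $Tx\neq Ty$, $$\varphi(d(x,y))+F(d(Tx,Ty))\le F(d(x,y)).$$ Then $T$ is a Picard operator.
   Context: $T$ is contractive if $d(Tx,Ty)<d(x,y)$ for all $x\neq y$. $T$ is a Picard operator if $T$ has a unique fixed point $u\in X$ and for every $x\in X$ the sequence $(T^nx)_{n\in\mathbb{N}}$ converges to $u$. *)

theory Defs
  imports "HOL-Analysis.Analysis"
begin

definition contractive :: "('a::metric_space \<Rightarrow> 'a) \<Rightarrow> bool" where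
  "contractive T \<longleftrightarrow> (\<forall>x y. x \<noteq> y \<longrightarrow> dist (T x) (T y) < dist x y)"

definition picard_operator :: "('a::metric_space \<Rightarrow> 'a) \<Rightarrow> bool" where
  "picard_operator T \<longleftrightarrow> (\<exists>u. T u = u \<and> (\<forall>v. T v = v \<longrightarrow> v = u)
      \<and> (\<forall>x. (\<lambda>n. (T ^^ n) x) \<longlonglongrightarrow> u))"

end

theory Submission
  imports Defs
begin

(* If there were pairs (x,y) whose
   distances d(x,y) and d(Tx,Ty) both decrease to some level eps > 0, right-continuity of F at eps
   would force limsup phi(d(x,y)) <= 0, against the hypothesis on phi. Hence T satisfies the
   Meir-Keeler type condition: for every eps > 0 there is delta > 0 with d(x,y) < eps + delta
   implying d(Tx,Ty) <= eps. A contractive map with this property is a Picard operator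
   (Jachymski): the steps d(x_n, x_(n+1)) of an orbit decrease to 0, and once they are below
   delta/2 from some index N on, the whole tail of the orbit stays within eps + delta/2 of x_N. *)

definition weak_meir_keeler :: "('a::metric_space \<Rightarrow> 'a) \<Rightarrow> bool" where
  "weak_meir_keeler T \<longleftrightarrow>
     (\<forall>\<epsilon>>0. \<exists>\<delta>>0. \<forall>x y. dist x y < \<epsilon> + \<delta> \<longrightarrow> dist (T x) (T y) \<le> \<epsilon>)"

lemma weak_meir_keelerE:
  assumes "weak_meir_keeler T" and "\<epsilon> > 0"
  obtains \<delta> where "\<delta> > 0" and "\<delta> \<le> \<epsilon>"
    and "\<And>x y. dist x y < \<epsilon> + \<delta> \<Longrightarrow> dist (T x) (T y) \<le> \<epsilon>"
proof -
  obtain \<delta> where "\<delta> > 0" and \<delta>: "\<And>x y. dist x y < \<epsilon> + \<delta> \<Longrightarrow> dist (T x) (T y) \<le> \<epsilon>"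
    using assms unfolding weak_meir_keeler_def by blast
  then show thesis
    using that[of "min \<delta> \<epsilon>"] \<open>\<epsilon> > 0\<close> by simp
qed

lemma contractive_imp_dist_le:
  assumes "contractive T"
  shows "dist (T x) (T y) \<le> dist x y"
  using assms unfolding contractive_def by (cases "x = y") (auto intro: less_imp_le)

lemma contractive_imp_continuous_on:
  assumes "contractive T"
  shows "continuous_on UNIV T"
  by (rule lipschitz_on_continuous_on[of 1])
     (simp add: lipschitz_on_def contractive_imp_dist_le[OF assms])

lemma contractive_fixpoint_unique:
  assumes "contractive T" and "T u = u" and "T v = v"
  shows "u = v"
  using assms unfolding contractive_def by force

lemma weak_meir_keeler_orbit_steps_tendsto_0:
  fixes T :: "'a::metric_space \<Rightarrow> 'a"
  assumes contr: "contractive T" and wmk: "weak_meir_keeler T"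
  shows "(\<lambda>n. dist ((T ^^ n) x) ((T ^^ Suc n) x)) \<longlonglongrightarrow> 0"
proof -
  define d where "d n = dist ((T ^^ n) x) ((T ^^ Suc n) x)" for n
  have d_nonneg: "d n \<ge> 0" for n
    by (simp add: d_def)
  have "decseq d"
    using contractive_imp_dist_le[OF contr] by (simp add: decseq_Suc_iff d_def)
  then obtain r where r: "d \<longlonglongrightarrow> r" and r_le: "\<And>n. r \<le> d n"
    using decseq_convergent[of d 0] d_nonneg by blast
  have "r \<ge> 0"
    using r d_nonneg by (blast intro: LIMSEQ_le_const)
  have "r = 0"
  proof (rule ccontr)
    assume "r \<noteq> 0"
    with \<open>r \<ge> 0\<close> have "r > 0" by simp
    have d_Suc_less: "d (Suc n) < d n" for n
    proof -
      have "d n > 0"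
        using r_le[of n] \<open>r > 0\<close> by linarith
      then have "(T ^^ n) x \<noteq> (T ^^ Suc n) x"
        unfolding d_def by (metis dist_self less_irrefl)
      then show ?thesis
        using contr unfolding contractive_def d_def by simp
    qed
    have r_less: "r < d (Suc n)" for n
      using d_Suc_less[of "Suc n"] r_le[of "Suc (Suc n)"] by linarith
    obtain \<delta> where "\<delta> > 0" and \<delta>: "\<And>x y. dist x y < r + \<delta> \<Longrightarrow> dist (T x) (T y) \<le> r"
      using wmk \<open>r > 0\<close> unfolding weak_meir_keeler_def by blast
    obtain n where "d n < r + \<delta>"
      using order_tendstoD(2)[OF r, of "r + \<delta>"] \<open>\<delta> > 0\<close>
      unfolding eventually_sequentially by auto
    then have "d (Suc n) \<le> r"
      using \<delta> by (simp add: d_def)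
    with r_less[of n] show False by simp
  qed
  with r show ?thesis
    unfolding d_def[abs_def] by simp
qed

lemma weak_meir_keeler_orbit_Cauchy:
  fixes T :: "'a::metric_space \<Rightarrow> 'a"
  assumes wmk: "weak_meir_keeler T"
    and steps: "(\<lambda>n. dist ((T ^^ n) x) ((T ^^ Suc n) x)) \<longlonglongrightarrow> 0"
  shows "Cauchy (\<lambda>n. (T ^^ n) x)"
  unfolding Cauchy_def
proof (intro allI impI)
  fix e :: real
  assume "e > 0"
  define \<epsilon> where "\<epsilon> = e / 3"
  have "\<epsilon> > 0" using \<open>e > 0\<close> by (simp add: \<epsilon>_def)
  obtain \<delta> where "\<delta> > 0" "\<delta> \<le> \<epsilon>"
    and \<delta>: "\<And>x y. dist x y < \<epsilon> + \<delta> \<Longrightarrow> dist (T x) (T y) \<le> \<epsilon>"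
    by (rule weak_meir_keelerE[OF wmk \<open>\<epsilon> > 0\<close>]) (rule that)
  obtain N where N: "\<And>n. n \<ge> N \<Longrightarrow> dist ((T ^^ n) x) ((T ^^ Suc n) x) < \<delta> / 2"
    using order_tendstoD(2)[OF steps, of "\<delta> / 2"] \<open>\<delta> > 0\<close>
    unfolding eventually_sequentially by auto
  have tail: "dist ((T ^^ N) x) ((T ^^ m) x) < \<epsilon> + \<delta> / 2" if "m \<ge> N" for m
    using that
  proof (induction m rule: dec_induct)
    case base
    show ?case using \<open>\<epsilon> > 0\<close> \<open>\<delta> > 0\<close> by simp
  next
    case (step m)
    have "dist ((T ^^ N) x) ((T ^^ Suc m) x)
        \<le> dist ((T ^^ N) x) ((T ^^ Suc N) x) + dist ((T ^^ Suc N) x) ((T ^^ Suc m) x)"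
      by (rule dist_triangle)
    also have "\<dots> < \<delta> / 2 + \<epsilon>"
      using N[of N] \<delta>[of "(T ^^ N) x" "(T ^^ m) x"] step.IH \<open>\<delta> > 0\<close>
      by (simp add: add_strict_increasing2)
    finally show ?case by simp
  qed
  have "dist ((T ^^ m) x) ((T ^^ n) x) < e" if "m \<ge> N" "n \<ge> N" for m n
  proof -
    have "dist ((T ^^ m) x) ((T ^^ n) x)
        \<le> dist ((T ^^ N) x) ((T ^^ m) x) + dist ((T ^^ N) x) ((T ^^ n) x)"
      by (rule dist_triangle3)
    also have "\<dots> < 2 * \<epsilon> + \<delta>"
      using tail[OF \<open>m \<ge> N\<close>] tail[OF \<open>n \<ge> N\<close>] by simp
    also have "\<dots> \<le> e"
      using \<open>\<delta> \<le> \<epsilon>\<close> by (simp add: \<epsilon>_def)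
    finally show ?thesis .
  qed
  then show "\<exists>M. \<forall>m\<ge>M. \<forall>n\<ge>M. dist ((T ^^ m) x) ((T ^^ n) x) < e"
    by blast
qed

lemma contractive_weak_meir_keeler_imp_picard_operator:
  fixes T :: "'a::complete_space \<Rightarrow> 'a"
  assumes contr: "contractive T" and wmk: "weak_meir_keeler T"
  shows "picard_operator T"
proof -
  have orbit_limit: "\<exists>u. T u = u \<and> (\<lambda>n. (T ^^ n) x) \<longlonglongrightarrow> u" for x
  proof -
    have "Cauchy (\<lambda>n. (T ^^ n) x)"
      using weak_meir_keeler_orbit_Cauchy[OF wmk]
        weak_meir_keeler_orbit_steps_tendsto_0[OF contr wmk] by blast
    then obtain u where u: "(\<lambda>n. (T ^^ n) x) \<longlonglongrightarrow> u"
      using Cauchy_convergent_iff convergent_def by blast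
    have "(\<lambda>n. T ((T ^^ n) x)) \<longlonglongrightarrow> T u"
      using continuous_on_tendsto_compose[OF contractive_imp_continuous_on[OF contr] u] by simp
    moreover have "(\<lambda>n. T ((T ^^ n) x)) \<longlonglongrightarrow> u"
      using LIMSEQ_Suc[OF u] by simp
    ultimately have "T u = u"
      by (rule LIMSEQ_unique)
    with u show ?thesis by blast
  qed
  then obtain u where "T u = u" by blast
  show ?thesis
    unfolding picard_operator_def
    using orbit_limit contractive_fixpoint_unique[OF contr] \<open>T u = u\<close> by metis
qed

lemma right_continuous_gap_limsup_le_0:
  fixes F \<phi> :: "real \<Rightarrow> real" and a b :: "nat \<Rightarrow> real"
  assumes F_rcont: "continuous (at_right t) F"
    and a: "\<And>n. a n > t" "a \<longlonglongrightarrow> t" and b: "\<And>n. b n > t" "b \<longlonglongrightarrow> t"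
    and gap: "\<And>n. \<phi> (a n) + F (b n) \<le> F (a n)"
  shows "limsup (\<lambda>n. ereal (\<phi> (a n))) \<le> 0"
proof -
  have F_lim: "(F \<longlongrightarrow> F t) (at_right t)"
    using F_rcont by (simp add: continuous_within)
  have "(\<lambda>n. F (a n)) \<longlonglongrightarrow> F t" "(\<lambda>n. F (b n)) \<longlonglongrightarrow> F t"
    using filterlim_compose[OF F_lim tendsto_imp_filterlim_at_right[OF a(2)]]
      filterlim_compose[OF F_lim tendsto_imp_filterlim_at_right[OF b(2)]] a(1) b(1)
    by auto
  then have "(\<lambda>n. ereal (F (a n) - F (b n))) \<longlonglongrightarrow> ereal 0"
    by (intro tendsto_intros) (auto intro: tendsto_eq_intros)
  have "limsup (\<lambda>n. ereal (\<phi> (a n))) \<le> limsup (\<lambda>n. ereal (F (a n) - F (b n)))"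
    using gap by (intro Limsup_mono always_eventually) (simp add: algebra_simps)
  also have "\<dots> = 0"
    using lim_imp_Limsup[OF _ \<open>_ \<longlonglongrightarrow> ereal 0\<close>] by (simp add: zero_ereal_def)
  finally show ?thesis .
qed

lemma weak_meir_keeler_if_gap_inequality:
  fixes T :: "'a::metric_space \<Rightarrow> 'a" and F \<phi> :: "real \<Rightarrow> real"
  assumes F_rcont: "\<And>t. t > 0 \<Longrightarrow> continuous (at_right t) F"
    and \<phi>_limsup: "\<And>t s. t > 0 \<Longrightarrow> (\<forall>n. s n > t) \<Longrightarrow> s \<longlonglongrightarrow> t
                 \<Longrightarrow> limsup (\<lambda>n. ereal (\<phi> (s n))) > 0"
    and nonexp: "\<And>x y. dist (T x) (T y) \<le> dist x y"
    and T_ineq: "\<And>x y. T x \<noteq> T y \<Longrightarrow>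
                 \<phi> (dist x y) + F (dist (T x) (T y)) \<le> F (dist x y)"
  shows "weak_meir_keeler T"
  unfolding weak_meir_keeler_def
proof (rule ccontr)
  assume "\<not> (\<forall>\<epsilon>>0. \<exists>\<delta>>0. \<forall>x y. dist x y < \<epsilon> + \<delta> \<longrightarrow> dist (T x) (T y) \<le> \<epsilon>)"
  then obtain \<epsilon> where "\<epsilon> > 0"
    and counterexample: "\<And>\<delta>. \<delta> > 0 \<Longrightarrow> \<exists>x y. dist x y < \<epsilon> + \<delta> \<and> \<epsilon> < dist (T x) (T y)"
    by (auto simp: not_le)
  have "\<forall>k. \<exists>x y. dist x y < \<epsilon> + inverse (real (Suc k)) \<and> \<epsilon> < dist (T x) (T y)"
    using counterexample by simp
  then obtain u v where uv: "\<And>k. dist (u k) (v k) < \<epsilon> + inverse (real (Suc k))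
                              \<and> \<epsilon> < dist (T (u k)) (T (v k))"
    by metis
  define a where "a k = dist (u k) (v k)" for k
  define b where "b k = dist (T (u k)) (T (v k))" for k
  have b_gt: "b k > \<epsilon>" and b_le_a: "b k \<le> a k" and a_less: "a k < \<epsilon> + inverse (real (Suc k))" for k
    using uv[of k] nonexp[of "u k" "v k"] by (auto simp: a_def b_def)
  have a_gt: "a k > \<epsilon>" for k
    using b_gt[of k] b_le_a[of k] by linarith
  have a_lim: "a \<longlonglongrightarrow> \<epsilon>"
  proof (rule tendsto_sandwich[OF _ _ tendsto_const LIMSEQ_inverse_real_of_nat_add])
    show "\<forall>\<^sub>F k in sequentially. \<epsilon> \<le> a k"
      by (intro always_eventually allI less_imp_le a_gt)
    show "\<forall>\<^sub>F k in sequentially. a k \<le> \<epsilon> + inverse (real (Suc k))"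
      by (intro always_eventually allI less_imp_le a_less)
  qed
  have b_lim: "b \<longlonglongrightarrow> \<epsilon>"
  proof (rule tendsto_sandwich[OF _ _ tendsto_const a_lim])
    show "\<forall>\<^sub>F k in sequentially. \<epsilon> \<le> b k"
      by (intro always_eventually allI less_imp_le b_gt)
    show "\<forall>\<^sub>F k in sequentially. b k \<le> a k"
      by (intro always_eventually allI b_le_a)
  qed
  have "T (u k) \<noteq> T (v k)" for k
    using b_gt[of k] \<open>\<epsilon> > 0\<close> by (auto simp: b_def)
  then have "\<phi> (a k) + F (b k) \<le> F (a k)" for k
    using T_ineq by (simp add: a_def b_def)
  then have "limsup (\<lambda>k. ereal (\<phi> (a k))) \<le> 0"
    by (rule right_continuous_gap_limsup_le_0[OF F_rcont[OF \<open>\<epsilon> > 0\<close>] a_gt a_lim b_gt b_lim])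
  with \<phi>_limsup[OF \<open>\<epsilon> > 0\<close> _ a_lim] a_gt show False
    by (simp add: not_le[symmetric])
qed

theorem mainTheorem7:
  fixes T :: "'a::complete_space \<Rightarrow> 'a"
    and F :: "real \<Rightarrow> real"
    and \<phi> :: "real \<Rightarrow> real"
  assumes F_rcont: "\<And>t. t > 0 \<Longrightarrow> continuous (at_right t) F"
    and \<phi>_pos: "\<And>t. t > 0 \<Longrightarrow> \<phi> t > 0"
    and \<phi>_limsup: "\<And>t s. t > 0 \<Longrightarrow> (\<forall>n. s n > t) \<Longrightarrow> s \<longlonglongrightarrow> t
                 \<Longrightarrow> limsup (\<lambda>n. ereal (\<phi> (s n))) > 0"
    and T_contr: "contractive T"
    and T_ineq: "\<And>x y. T x \<noteq> T y \<Longrightarrow>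
                 \<phi> (dist x y) + F (dist (T x) (T y)) \<le> F (dist x y)"
  shows "picard_operator T"
proof -
  have "weak_meir_keeler T"
    using weak_meir_keeler_if_gap_inequality[OF F_rcont \<phi>_limsup
        contractive_imp_dist_le[OF T_contr] T_ineq] .
  with T_contr show ?thesis
    by (rule contractive_weak_meir_keeler_imp_picard_operator)
qed

end
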